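(* Let $G=(V,E,w)$ be a connected, locally finite weighted graph with edge weights $w_e>0$, let $x\in V$, and let $u:V\to\mathbb{R}$ satisfy $\sum_{y:\,(v,y)\in E} w_{vy}(u(y)-u(v))=0$ for every $v\in V$. For integers $k\ge 0$ define $$N(k) = \sum_{y \in V:\, d(x,y)=k+1} d_{\mathrm{in}}(y)\, u(y)^2 \;-\; \sum_{y \in V:\, d(x,y)=k} d_{\mathrm{out}}(y)\, u(y)^2 .$$ Then $N(k)\ge 0$ and $N(k+1)\ge N(k)$ for all $k\ge 0$.
   Context: $d(\cdot,\cdot)$ is the unweighted graph (shortest-path, number of edges) distance in $G$. Let $V_k=\{v\in V: d(x,v)=k\}$. For $v\in V_k$, the weighted in-degree is $d_{\mathrm{in}}(v)=\sum_{y\in V_{k-1},\,(y,v)\in E} w_{yv}$ and the weighted out-degree is $d_{\mathrm{out}}(v)=\sum_{y\in V_{k+1},\,(v,y)\in E} w_{vy}$. *)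

theory Defs
  imports Complex_Main
begin

definition gdist :: "('a \<Rightarrow> 'a \<Rightarrow> bool) \<Rightarrow> 'a \<Rightarrow> 'a \<Rightarrow> nat" where
  "gdist E a b = (LEAST n. (E ^^ n) a b)"

definition connected_graph :: "'a set \<Rightarrow> ('a \<Rightarrow> 'a \<Rightarrow> bool) \<Rightarrow> bool" where
  "connected_graph V E \<longleftrightarrow> (\<forall>a\<in>V. \<forall>b\<in>V. \<exists>n. (E ^^ n) a b)"

definition locally_finite :: "'a set \<Rightarrow> ('a \<Rightarrow> 'a \<Rightarrow> bool) \<Rightarrow> bool" where
  "locally_finite V E \<longleftrightarrow> (\<forall>v\<in>V. finite {y. E v y})"

definition din :: "'a set \<Rightarrow> ('a \<Rightarrow> 'a \<Rightarrow> bool) \<Rightarrow> ('a \<Rightarrow> 'a \<Rightarrow> real) \<Rightarrow> 'a \<Rightarrow> 'a \<Rightarrow> real" where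
  "din V E w x v = (\<Sum>y\<in>{y\<in>V. E y v \<and> gdist E x y + 1 = gdist E x v}. w y v)"

definition dout :: "'a set \<Rightarrow> ('a \<Rightarrow> 'a \<Rightarrow> bool) \<Rightarrow> ('a \<Rightarrow> 'a \<Rightarrow> real) \<Rightarrow> 'a \<Rightarrow> 'a \<Rightarrow> real" where
  "dout V E w x v = (\<Sum>y\<in>{y\<in>V. E v y \<and> gdist E x y = gdist E x v + 1}. w v y)"

definition Nfun :: "'a set \<Rightarrow> ('a \<Rightarrow> 'a \<Rightarrow> bool) \<Rightarrow> ('a \<Rightarrow> 'a \<Rightarrow> real) \<Rightarrow> 'a \<Rightarrow> ('a \<Rightarrow> real) \<Rightarrow> nat \<Rightarrow> real" where
  "Nfun V E w x u k =
     (\<Sum>y\<in>{y\<in>V. gdist E x y = k + 1}. din V E w x y * (u y)\<^sup>2)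
   - (\<Sum>y\<in>{y\<in>V. gdist E x y = k}. dout V E w x y * (u y)\<^sup>2)"

end

theory Submission
  imports Defs
begin

(* Since u is harmonic, u^2 is subharmonic: its Laplacian at v is the sum of w_vy (u y - u v)^2.
   N(k) is the flux of u^2 from V_k to V_(k+1), i.e. the sum of w_ab (u(b)^2 - u(a)^2) over the
   edges from a in V_k to b in V_(k+1).  Summing the Laplacian of u^2 over V_k, the edges inside
   V_k cancel by antisymmetry, leaving N(k) - N(k-1) (or N(0) when k = 0), which is therefore
   nonnegative. *)

locale weighted_graph =
  fixes V :: "'a set" and E :: "'a \<Rightarrow> 'a \<Rightarrow> bool" and w :: "'a \<Rightarrow> 'a \<Rightarrow> real"
  assumes E_in_V: "\<And>a b. E a b \<Longrightarrow> a \<in> V \<and> b \<in> V"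
    and E_sym: "\<And>a b. E a b \<Longrightarrow> E b a"
    and w_sym: "\<And>a b. E a b \<Longrightarrow> w a b = w b a"
    and w_pos: "\<And>a b. E a b \<Longrightarrow> w a b > 0"
    and locfin: "locally_finite V E"
begin

definition laplacian :: "('a \<Rightarrow> real) \<Rightarrow> 'a \<Rightarrow> real" where
  "laplacian f v = (\<Sum>y\<in>{y. E v y}. w v y * (f y - f v))"

definition edge_flow :: "('a \<Rightarrow> real) \<Rightarrow> 'a set \<Rightarrow> 'a set \<Rightarrow> real" where
  "edge_flow f A B = (\<Sum>a\<in>A. \<Sum>b\<in>{b\<in>B. E a b}. w a b * (f b - f a))"

lemma finite_neighbours: "finite {b. E a b}"
proof (cases "a \<in> V")
  case True
  then show ?thesis using locfin unfolding locally_finite_def by blast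
next
  case False
  then have "{b. E a b} = {}" using E_in_V by blast
  then show ?thesis by simp
qed

lemma laplacian_square:
  "laplacian (\<lambda>y. (u y)\<^sup>2) v = (\<Sum>y\<in>{y. E v y}. w v y * (u y - u v)\<^sup>2) + 2 * u v * laplacian u v"
proof -
  have "laplacian (\<lambda>y. (u y)\<^sup>2) v
      = (\<Sum>y\<in>{y. E v y}. w v y * (u y - u v)\<^sup>2 + 2 * u v * (w v y * (u y - u v)))"
    unfolding laplacian_def by (rule sum.cong) (auto simp: algebra_simps power2_eq_square)
  then show ?thesis
    by (simp add: laplacian_def sum.distrib sum_distrib_left)
qed

lemma laplacian_square_nonneg:
  assumes "laplacian u v = 0"
  shows "laplacian (\<lambda>y. (u y)\<^sup>2) v \<ge> 0"
proof -
  have "(\<Sum>y\<in>{y. E v y}. w v y * (u y - u v)\<^sup>2) \<ge> 0"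
    by (rule sum_nonneg) (simp add: less_imp_le w_pos)
  then show ?thesis
    using assms by (simp add: laplacian_square)
qed

lemma edge_flow_swap:
  assumes "finite A" "finite B"
  shows "edge_flow f B A = - edge_flow f A B"
proof -
  have "edge_flow f B A = (\<Sum>a\<in>A. \<Sum>b\<in>{b\<in>B. E b a}. w b a * (f a - f b))"
    unfolding edge_flow_def by (rule sum.swap_restrict) (use assms in auto)
  also have "\<dots> = (\<Sum>a\<in>A. \<Sum>b\<in>{b\<in>B. E a b}. - (w a b * (f b - f a)))"
    by (intro sum.cong refl) (auto simp: E_sym w_sym algebra_simps)
  also have "\<dots> = - edge_flow f A B"
    by (simp add: edge_flow_def sum_negf)
  finally show ?thesis .
qed

lemma edge_flow_self: "finite A \<Longrightarrow> edge_flow f A A = 0"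
  using edge_flow_swap[of A A f] by simp

lemma edge_flow_Un:
  assumes "finite B" "finite C" "B \<inter> C = {}"
  shows "edge_flow f A (B \<union> C) = edge_flow f A B + edge_flow f A C"
proof -
  have "{b\<in>B \<union> C. E a b} = {b\<in>B. E a b} \<union> {b\<in>C. E a b}" for a
    by blast
  then show ?thesis
    using assms by (simp add: edge_flow_def sum.union_disjoint disjoint_iff sum.distrib)
qed

lemma sum_laplacian_eq_edge_flow:
  assumes "\<And>a b. a \<in> A \<Longrightarrow> E a b \<Longrightarrow> b \<in> B"
  shows "(\<Sum>a\<in>A. laplacian f a) = edge_flow f A B"
  unfolding laplacian_def edge_flow_def
  by (intro sum.cong refl) (use assms in blast)

end

locale rooted_graph = weighted_graph +
  fixes x :: 'a
  assumes conn: "connected_graph V E"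
    and x_in: "x \<in> V"
begin

definition sphere :: "nat \<Rightarrow> 'a set" where
  "sphere m = {v\<in>V. gdist E x v = m}"

definition flux :: "('a \<Rightarrow> real) \<Rightarrow> nat \<Rightarrow> real" where
  "flux f m = edge_flow f (sphere m) (sphere (Suc m))"

lemma walk_gdist: "v \<in> V \<Longrightarrow> (E ^^ gdist E x v) x v"
  using conn x_in unfolding connected_graph_def gdist_def by (meson LeastI)

lemma gdist_le_walk: "(E ^^ n) x v \<Longrightarrow> gdist E x v \<le> n"
  unfolding gdist_def by (rule Least_le)

lemma gdist_neighbour_le:
  assumes "E a b"
  shows "gdist E x b \<le> gdist E x a + 1"
proof -
  have "(E ^^ Suc (gdist E x a)) x b"
    using walk_gdist assms E_in_V by (meson relpowp_Suc_I)
  then show ?thesis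
    using gdist_le_walk by fastforce
qed

lemma finite_walk_ends: "finite {v. (E ^^ m) x v}"
proof (induction m)
  case 0
  then show ?case by simp
next
  case (Suc m)
  have "{v. (E ^^ Suc m) x v} = (\<Union>a\<in>{v. (E ^^ m) x v}. {b. E a b})"
    by (auto intro: relpowp_Suc_I elim: relpowp_Suc_E)
  then show ?case
    using Suc finite_neighbours by simp
qed

lemma finite_sphere: "finite (sphere m)"
  by (rule finite_subset[OF _ finite_walk_ends[of m]]) (auto simp: sphere_def dest: walk_gdist)

lemma neighbour_sphere_0: "a \<in> sphere 0 \<Longrightarrow> E a b \<Longrightarrow> b \<in> sphere 0 \<union> sphere 1"
  using gdist_neighbour_le[of a b] gdist_neighbour_le[of b a] E_sym E_in_V by (auto simp: sphere_def)

lemma neighbour_sphere_Suc: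
  "a \<in> sphere (Suc m) \<Longrightarrow> E a b \<Longrightarrow> b \<in> (sphere m \<union> sphere (Suc m)) \<union> sphere (Suc (Suc m))"
  using gdist_neighbour_le[of a b] gdist_neighbour_le[of b a] E_sym E_in_V by (auto simp: sphere_def)

lemma sphere_disjoint: "m \<noteq> n \<Longrightarrow> sphere m \<inter> sphere n = {}"
  by (auto simp: sphere_def)

lemma sum_laplacian_sphere_0: "(\<Sum>v\<in>sphere 0. laplacian f v) = flux f 0"
proof -
  have "(\<Sum>v\<in>sphere 0. laplacian f v) = edge_flow f (sphere 0) (sphere 0 \<union> sphere 1)"
    by (rule sum_laplacian_eq_edge_flow) (rule neighbour_sphere_0)
  also have "\<dots> = flux f 0"
    by (simp add: edge_flow_Un finite_sphere sphere_disjoint edge_flow_self flux_def)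
  finally show ?thesis .
qed

lemma sum_laplacian_sphere_Suc:
  "(\<Sum>v\<in>sphere (Suc m). laplacian f v) = flux f (Suc m) - flux f m"
proof -
  have "(\<Sum>v\<in>sphere (Suc m). laplacian f v)
      = edge_flow f (sphere (Suc m)) ((sphere m \<union> sphere (Suc m)) \<union> sphere (Suc (Suc m)))"
    by (rule sum_laplacian_eq_edge_flow) (rule neighbour_sphere_Suc)
  also have "\<dots> = flux f (Suc m) - flux f m"
    by (simp add: edge_flow_Un finite_sphere Int_Un_distrib2 sphere_disjoint edge_flow_self flux_def
        edge_flow_swap[of "sphere m" "sphere (Suc m)"])
  finally show ?thesis .
qed

lemma flux_subharmonic_mono:
  assumes "\<And>v. v \<in> V \<Longrightarrow> laplacian f v \<ge> 0"
  shows "mono (flux f)"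
  unfolding mono_iff_le_Suc
proof
  fix m
  have "(\<Sum>v\<in>sphere (Suc m). laplacian f v) \<ge> 0"
    using assms by (auto intro: sum_nonneg simp: sphere_def)
  then show "flux f m \<le> flux f (Suc m)"
    by (simp add: sum_laplacian_sphere_Suc)
qed

lemma flux_subharmonic_nonneg:
  assumes "\<And>v. v \<in> V \<Longrightarrow> laplacian f v \<ge> 0"
  shows "flux f m \<ge> 0"
proof -
  have "(\<Sum>v\<in>sphere 0. laplacian f v) \<ge> 0"
    using assms by (auto intro: sum_nonneg simp: sphere_def)
  then have "flux f 0 \<ge> 0"
    by (simp add: sum_laplacian_sphere_0)
  also have "flux f 0 \<le> flux f m"
    using flux_subharmonic_mono[OF assms] by (simp add: monoD)
  finally show ?thesis .
qed

lemma Nfun_eq_flux: "Nfun V E w x u m = flux (\<lambda>v. (u v)\<^sup>2) m"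
proof -
  let ?f = "\<lambda>v. (u v)\<^sup>2"
  let ?S = "sphere m" and ?T = "sphere (Suc m)"
  have din: "din V E w x b = (\<Sum>a\<in>{a\<in>?S. E a b}. w a b)" if "b \<in> ?T" for b
    unfolding din_def using that by (intro sum.cong) (auto simp: sphere_def)
  have dout: "dout V E w x a = (\<Sum>b\<in>{b\<in>?T. E a b}. w a b)" if "a \<in> ?S" for a
    unfolding dout_def using that by (intro sum.cong) (auto simp: sphere_def)
  have "Nfun V E w x u m = (\<Sum>b\<in>?T. din V E w x b * ?f b) - (\<Sum>a\<in>?S. dout V E w x a * ?f a)"
    by (simp add: Nfun_def sphere_def)
  also have "\<dots> = (\<Sum>b\<in>?T. \<Sum>a\<in>{a\<in>?S. E a b}. w a b * ?f b) - (\<Sum>a\<in>?S. \<Sum>b\<in>{b\<in>?T. E a b}. w a b * ?f a)"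
    by (simp add: din dout sum_distrib_right)
  also have "(\<Sum>b\<in>?T. \<Sum>a\<in>{a\<in>?S. E a b}. w a b * ?f b) = (\<Sum>a\<in>?S. \<Sum>b\<in>{b\<in>?T. E a b}. w a b * ?f b)"
    by (rule sum.swap_restrict[symmetric]) (auto simp: finite_sphere)
  finally show ?thesis
    by (simp add: flux_def edge_flow_def sum_subtractf[symmetric] right_diff_distrib)
qed

end

theorem mainTheorem2:
  fixes V :: "'a set" and E :: "'a \<Rightarrow> 'a \<Rightarrow> bool" and w :: "'a \<Rightarrow> 'a \<Rightarrow> real"
    and x :: 'a and u :: "'a \<Rightarrow> real"
  assumes E_in_V: "\<And>a b. E a b \<Longrightarrow> a \<in> V \<and> b \<in> V"
    and E_sym: "\<And>a b. E a b \<Longrightarrow> E b a"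
    and w_sym: "\<And>a b. E a b \<Longrightarrow> w a b = w b a"
    and w_pos: "\<And>a b. E a b \<Longrightarrow> w a b > 0"
    and conn: "connected_graph V E"
    and locfin: "locally_finite V E"
    and x_in: "x \<in> V"
    and harmonic: "\<And>v. v \<in> V \<Longrightarrow> (\<Sum>y\<in>{y. E v y}. w v y * (u y - u v)) = 0"
  shows "\<forall>k. Nfun V E w x u k \<ge> 0 \<and> Nfun V E w x u (k + 1) \<ge> Nfun V E w x u k"
proof -
  interpret rooted_graph V E w x
    by unfold_locales (use assms in auto)
  have "laplacian u v = 0" if "v \<in> V" for v
    using harmonic[OF that] by (simp add: laplacian_def)
  then have "\<And>v. v \<in> V \<Longrightarrow> laplacian (\<lambda>y. (u y)\<^sup>2) v \<ge> 0"
    by (simp add: laplacian_square_nonneg)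
  then have "flux (\<lambda>y. (u y)\<^sup>2) k \<ge> 0"
    and "flux (\<lambda>y. (u y)\<^sup>2) k \<le> flux (\<lambda>y. (u y)\<^sup>2) (k + 1)" for k
    by (auto intro: flux_subharmonic_nonneg monoD[OF flux_subharmonic_mono])
  then show ?thesis
    unfolding Nfun_eq_flux by blast
qed

end
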